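(* Under either the overlap preference model or the cost preference model, any pair $\langle R,F\rangle$ consisting of a non-wasteful shortlisting rule $R$ and an exhaustive allocation rule $F$ is neither R-FSSP-P nor R-FSSP-A (and hence also not R-FSSP-O).
   Context: Let $\mathbb{P}=\{p_1,\dots,p_m\}$ be a finite set of projects, $c:\mathbb{P}\to\mathbb{N}$ a cost function with $c(P)=\sum_{p\in P}c(p)$, $B\in\mathbb{N}$ a budget with $c(p)\le B$ for all $p$; agents $\mathcal{N}=\{1,\dots,n\}$. Tie-breaking: for a nonempty family $\mathfrak{P}$ of subsets of $\mathbb{P}$, $T(\mathfrak{P})$ is the unique $P\in\mathfrak{P}$ such that for all $P'\in\mathfrak{P}\setminus\{P\}$ the lowest-index project of $(P\setminus P')\cup(P'\setminus P)$ lies in $P$. Greedy selection $\mathit{GREED}(P,\gg)$, for $P\subseteq\mathbb{P}$ and a strict linear order $\gg$ on $P$, examines projects in the order $\gg$ and selects a project iff doing so keeps the total cost of selected projects at most $B$. Shortlisting stage: a shortlisting instance is $\langle\mathbb{P},c,B\rangle$; a shortlisting profile is $\boldsymbol{P}=(P_1,\dots,P_n)$, $P_i\subseteq\mathbb{P}$, $\bigcup\boldsymbol{P}=P_1\cup\dots\cup P_n$; $(\boldsymbol{P}_{-i},P_i')$ replaces $P_i$ by $P_i'$; a shortlisting rule $R$ outputs $R(I,\boldsymbol{P})\subseteq\bigcup\boldsymbol{P}$. $R$ is non-wasteful if for every $I,\boldsymbol{P}$, either $c(R(I,\boldsymbol{P}))\ge B$ or $R(I,\boldsymbol{P})=\bigcup\boldsymbol{P}$.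 Each agent $i$ has an awareness set $C_i\subseteq\mathbb{P}$; $\boldsymbol{C}=(C_1,\dots,C_n)$. Allocation stage: an allocation instance is $\langle\mathcal{P},c,B\rangle$, $\mathcal{P}\subseteq\mathbb{P}$; a profile $\boldsymbol{A}=(A_1,\dots,A_n)$, $A_i\subseteq\mathcal{P}$; $A\subseteq\mathcal{P}$ is feasible if $c(A)\le B$ and exhaustive if it is feasible and there is no $p\in\mathcal{P}\setminus A$ with $c(A\cup\{p\})\le B$; an allocation rule $F$ outputs a feasible $F(I,\boldsymbol{A})$, and is exhaustive if its output is always exhaustive. Preferences: each agent $i$ has a strict linear order $\rhd_i$ on $\mathbb{P}$; $\mathit{top}_i(\mathcal{P})=\mathit{GREED}(\mathcal{P},\rhd_i|_{\mathcal{P}})$, $\boldsymbol{top}(\mathcal{P})=(\mathit{top}_1(\mathcal{P}),\dots,\mathit{top}_n(\mathcal{P}))$. For $P\subseteq\mathbb{P}$: overlap model $A\succeq_P A'$ iff $|A\cap P|\ge|A'\cap P|$; cost model $A\succeq_P A'$ iff $c(A\cap P)\ge c(A'\cap P)$; $\succ_P$ its strict part. $\mathit{best}(\succ,\mathfrak{P})$ is the set of elements of $\mathfrak{P}$ undominated w.r.t. $\succ$. Best response: for $I=\langle\mathcal{P},c,B\rangle$, profile $\boldsymbol{A}$, agent $i$: $A_i^\star(I,\boldsymbol{A})=T(\mathit{best}(\succ_{\mathit{top}_i(\mathcal{P})},\{F(I,(\boldsymbol{A}_{-i},A_i'))\mid A_i'\subseteq\mathcal{P}\}))$ and $F^\star(I,\boldsymbol{A})=F(I,(\boldsymbol{A}_{-i},A_i^\star(I,\boldsymbol{A})))$.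 Manipulation: given $R,F$, shortlisting instance $I_1$, profile $\boldsymbol{P}$, agent $i$, $P_i'\subseteq\mathbb{P}$, let $\mathcal{P}=R(I_1,\boldsymbol{P})$, $\mathcal{P}'=R(I_1,(\boldsymbol{P}_{-i},P_i'))$, $I_2=\langle\mathcal{P},c,B\rangle$, $I_2'=\langle\mathcal{P}',c,B\rangle$, $Q=\mathit{top}_i(\mathcal{P}\cup\mathcal{P}')$. $P_i'$ is a successful pessimistic manipulation if for all profiles $\boldsymbol{A}$ on $\mathcal{P}$ and $\boldsymbol{A}'$ on $\mathcal{P}'$, $F^\star(I_2',\boldsymbol{A}')\succeq_Q F^\star(I_2,\boldsymbol{A})$, strictly for at least one pair; successful optimistic if for some $\boldsymbol{A}$ on $\mathcal{P}$ and some $\boldsymbol{A}'$ on $\mathcal{P}'$, $F^\star(I_2',\boldsymbol{A}')\succ_Q F^\star(I_2,\boldsymbol{A})$; successful anticipative if $F^\star(I_2',\boldsymbol{top}(\mathcal{P}'))\succ_Q F^\star(I_2,\boldsymbol{top}(\mathcal{P}))$. R-FSSP: for a preference model, $\langle R,F\rangle$ is R-FSSP w.r.t. a manipulation type if for every shortlisting instance, awareness profile $\boldsymbol{C}$, shortlisting profile $\boldsymbol{P}$ with $P_{i'}\subseteq C_{i'}$ for all $i'$, and agent $i$, there is no $P_i'\subseteq C_i$ such that submitting $P_i'$ instead of $\mathit{top}_i(C_i)$ (i.e., going from $(\boldsymbol{P}_{-i},\mathit{top}_i(C_i))$ to $(\boldsymbol{P}_{-i},P_i')$) is a successful manipulation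 of that type. R-FSSP-P, R-FSSP-O, R-FSSP-A refer to pessimistic, optimistic, anticipative manipulation. *)

theory Defs
  imports Main
begin

text \<open>Projects are natural numbers; the index order of projects is the usual order on nat. Agents are list positions 0..n-1;
  a profile is a list of sets (one per agent). Preferences are strict linear orders on PP,
  given as relations (x,y) in r meaning x is preferred to y.\<close>

type_synonym rule = "nat set \<Rightarrow> (nat \<Rightarrow> nat) \<Rightarrow> nat \<Rightarrow> nat set list \<Rightarrow> nat set"

definition tie_break :: "nat set set \<Rightarrow> nat set" where
  "tie_break Fam = (THE P. P \<in> Fam \<and> (\<forall>P'\<in>Fam - {P}. Min ((P - P') \<union> (P' - P)) \<in> P))"

definition order_list :: "nat rel \<Rightarrow> nat set \<Rightarrow> nat list" where
  "order_list r P = (THE xs. set xs = P \<and> distinct xs \<and> sorted_wrt (\<lambda>x y. (x, y) \<in> r) xs)"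

definition greed :: "(nat \<Rightarrow> nat) \<Rightarrow> nat \<Rightarrow> nat set \<Rightarrow> nat rel \<Rightarrow> nat set" where
  "greed c B P r = foldl (\<lambda>S x. if sum c S + c x \<le> B then insert x S else S) {} (order_list r P)"

definition top :: "(nat \<Rightarrow> nat) \<Rightarrow> nat \<Rightarrow> nat rel \<Rightarrow> nat set \<Rightarrow> nat set" where
  "top c B r P = greed c B P r"

datatype pref_model = Overlap | CostModel

definition weak_pref :: "pref_model \<Rightarrow> (nat \<Rightarrow> nat) \<Rightarrow> nat set \<Rightarrow> nat set \<Rightarrow> nat set \<Rightarrow> bool" where
  "weak_pref M c Q A A' = (case M of
      Overlap \<Rightarrow> card (A \<inter> Q) \<ge> card (A' \<inter> Q)
    | CostModel \<Rightarrow> sum c (A \<inter> Q) \<ge> sum c (A' \<inter> Q))"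

definition strict_pref :: "pref_model \<Rightarrow> (nat \<Rightarrow> nat) \<Rightarrow> nat set \<Rightarrow> nat set \<Rightarrow> nat set \<Rightarrow> bool" where
  "strict_pref M c Q A A' = (weak_pref M c Q A A' \<and> \<not> weak_pref M c Q A' A)"

definition best :: "pref_model \<Rightarrow> (nat \<Rightarrow> nat) \<Rightarrow> nat set \<Rightarrow> nat set set \<Rightarrow> nat set set" where
  "best M c Q Fam = {A \<in> Fam. \<not> (\<exists>A'\<in>Fam. strict_pref M c Q A' A)}"

definition valid_instance :: "nat set \<Rightarrow> (nat \<Rightarrow> nat) \<Rightarrow> nat \<Rightarrow> bool" where
  "valid_instance PP c B = (finite PP \<and> (\<forall>p\<in>PP. c p \<le> B))"

definition profile_on :: "nat set \<Rightarrow> nat set list \<Rightarrow> bool" where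
  "profile_on X Ps = (\<forall>A\<in>set Ps. A \<subseteq> X)"

definition is_shortlisting_rule :: "rule \<Rightarrow> bool" where
  "is_shortlisting_rule R = (\<forall>PP c B Ps. valid_instance PP c B \<and> profile_on PP Ps
      \<longrightarrow> R PP c B Ps \<subseteq> \<Union> (set Ps))"

definition non_wasteful :: "rule \<Rightarrow> bool" where
  "non_wasteful R = (\<forall>PP c B Ps. valid_instance PP c B \<and> profile_on PP Ps
      \<longrightarrow> sum c (R PP c B Ps) \<ge> B \<or> R PP c B Ps = \<Union> (set Ps))"

definition feasible :: "nat set \<Rightarrow> (nat \<Rightarrow> nat) \<Rightarrow> nat \<Rightarrow> nat set \<Rightarrow> bool" where
  "feasible P c B A = (A \<subseteq> P \<and> sum c A \<le> B)"

definition exhaustive :: "nat set \<Rightarrow> (nat \<Rightarrow> nat) \<Rightarrow> nat \<Rightarrow> nat set \<Rightarrow> bool" where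
  "exhaustive P c B A = (feasible P c B A \<and> \<not> (\<exists>p\<in>P - A. sum c (insert p A) \<le> B))"

definition is_allocation_rule :: "rule \<Rightarrow> bool" where
  "is_allocation_rule F = (\<forall>P c B As. valid_instance P c B \<and> profile_on P As
      \<longrightarrow> feasible P c B (F P c B As))"

definition exhaustive_rule :: "rule \<Rightarrow> bool" where
  "exhaustive_rule F = (\<forall>P c B As. valid_instance P c B \<and> profile_on P As
      \<longrightarrow> exhaustive P c B (F P c B As))"

definition best_resp :: "pref_model \<Rightarrow> rule \<Rightarrow> nat rel list \<Rightarrow> nat \<Rightarrow> nat set \<Rightarrow> (nat \<Rightarrow> nat) \<Rightarrow> nat
    \<Rightarrow> nat set list \<Rightarrow> nat set" where
  "best_resp M F prefs i P c B As =
     tie_break (best M c (top c B (prefs ! i) P) {F P c B (As[i := A']) | A'. A' \<subseteq> P})"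

definition F_star :: "pref_model \<Rightarrow> rule \<Rightarrow> nat rel list \<Rightarrow> nat \<Rightarrow> nat set \<Rightarrow> (nat \<Rightarrow> nat) \<Rightarrow> nat
    \<Rightarrow> nat set list \<Rightarrow> nat set" where
  "F_star M F prefs i P c B As = F P c B (As[i := best_resp M F prefs i P c B As])"

datatype manip_kind = Pessimistic | Optimistic | Anticipative

definition successful_manip :: "manip_kind \<Rightarrow> pref_model \<Rightarrow> rule \<Rightarrow> rule \<Rightarrow> nat rel list
    \<Rightarrow> nat set \<Rightarrow> (nat \<Rightarrow> nat) \<Rightarrow> nat \<Rightarrow> nat set list \<Rightarrow> nat \<Rightarrow> nat set \<Rightarrow> bool" where
  "successful_manip k M R F prefs PP c B Ps i P' =
    (let SP = R PP c B Ps; SP' = R PP c B (Ps[i := P']);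
         Q = top c B (prefs ! i) (SP \<union> SP');
         profs = (\<lambda>X. {As. length As = length Ps \<and> profile_on X As});
         Fs = F_star M F prefs i
     in case k of
       Pessimistic \<Rightarrow>
         (\<forall>A\<in>profs SP. \<forall>A'\<in>profs SP'. weak_pref M c Q (Fs SP' c B A') (Fs SP c B A)) \<and>
         (\<exists>A\<in>profs SP. \<exists>A'\<in>profs SP'. strict_pref M c Q (Fs SP' c B A') (Fs SP c B A))
     | Optimistic \<Rightarrow>
         (\<exists>A\<in>profs SP. \<exists>A'\<in>profs SP'. strict_pref M c Q (Fs SP' c B A') (Fs SP c B A))
     | Anticipative \<Rightarrow>
         strict_pref M c Q (Fs SP' c B (map (\<lambda>r. top c B r SP') prefs))
                           (Fs SP c B (map (\<lambda>r. top c B r SP) prefs)))"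

definition R_FSSP :: "manip_kind \<Rightarrow> pref_model \<Rightarrow> rule \<Rightarrow> rule \<Rightarrow> bool" where
  "R_FSSP k M R F = (\<forall>PP c B Cs Ps prefs i P'.
      valid_instance PP c B \<and> length Cs = length Ps \<and> length prefs = length Ps \<and>
      (\<forall>j<length Ps. Ps ! j \<subseteq> Cs ! j \<and> Cs ! j \<subseteq> PP \<and> strict_linear_order_on PP (prefs ! j)) \<and>
      i < length Ps \<and> P' \<subseteq> Cs ! i
      \<longrightarrow> \<not> successful_manip k M R F prefs PP c B
              (Ps[i := top c B (prefs ! i) (Cs ! i)]) i P')"

end

theory Submission
  imports Defs
begin

(* Take projects 0, 1, 2 ranked by index, budget 2, and let project 1 cost 2 and the others 1.
   An agent aware of {1, 2} truthfully submits top {1, 2} = {1}, since greedy selection takes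
   the expensive project first. If the other agent submits {0}, the shortlist lies in {0, 1},
   so no allocation funds more of the agent's target top {0, 1, 2} = {0, 2} than project 0.
   Submitting {2} instead makes {0, 2} affordable: non-wastefulness then shortlists all of it
   and exhaustiveness funds all of it. Every outcome after the manipulation thus beats every
   outcome before it, which makes the manipulation successful in each of the three senses. *)

definition lex_greater :: "nat set \<Rightarrow> nat set \<Rightarrow> bool" where
  "lex_greater P P' \<longleftrightarrow> P \<noteq> P' \<and> Min (sym_diff P P') \<in> P"

lemma lex_greater_iff_first_difference:
  assumes "finite P" "finite P'"
  shows "lex_greater P P' \<longleftrightarrow> (\<exists>m. m \<in> P \<and> m \<notin> P' \<and> (\<forall>z<m. z \<in> P \<longleftrightarrow> z \<in> P'))"
proof
  assume "lex_greater P P'"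
  then have "P \<noteq> P'" and m: "Min (sym_diff P P') \<in> P" by (auto simp: lex_greater_def)
  then have "Min (sym_diff P P') \<in> sym_diff P P'"
    using assms by (intro Min_in) auto
  then have "Min (sym_diff P P') \<notin> P'" using m by blast
  moreover have "z \<in> P \<longleftrightarrow> z \<in> P'" if "z < Min (sym_diff P P')" for z
    using that assms by (meson Diff_iff Min_le UnCI finite_Diff finite_UnI leD)
  ultimately show "\<exists>m. m \<in> P \<and> m \<notin> P' \<and> (\<forall>z<m. z \<in> P \<longleftrightarrow> z \<in> P')"
    using m by blast
next
  assume "\<exists>m. m \<in> P \<and> m \<notin> P' \<and> (\<forall>z<m. z \<in> P \<longleftrightarrow> z \<in> P')"
  then obtain m where m: "m \<in> P" "m \<notin> P'" "\<forall>z<m. z \<in> P \<longleftrightarrow> z \<in> P'" by blast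
  have "Min (sym_diff P P') = m"
    by (rule Min_eqI) (use assms m in \<open>auto simp: not_less[symmetric]\<close>)
  with m show "lex_greater P P'" by (auto simp: lex_greater_def)
qed

lemma lex_greater_asym:
  assumes "finite P" "finite P'" "lex_greater P P'"
  shows "\<not> lex_greater P' P"
proof
  assume "lex_greater P' P"
  then obtain m' where m': "m' \<in> P'" "m' \<notin> P" "\<forall>z<m'. z \<in> P' \<longleftrightarrow> z \<in> P"
    using lex_greater_iff_first_difference[OF assms(2,1)] by blast
  obtain m where m: "m \<in> P" "m \<notin> P'" "\<forall>z<m. z \<in> P \<longleftrightarrow> z \<in> P'"
    using assms lex_greater_iff_first_difference by blast
  show False
    using m m' by (cases m m' rule: linorder_cases) auto
qed

lemma lex_greater_trans:
  assumes "finite P" "finite P'" "finite P''" "lex_greater P P'" "lex_greater P' P''"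
  shows "lex_greater P P''"
proof -
  obtain m where m: "m \<in> P" "m \<notin> P'" "\<forall>z<m. z \<in> P \<longleftrightarrow> z \<in> P'"
    using assms(1,2,4) lex_greater_iff_first_difference by blast
  obtain m' where m': "m' \<in> P'" "m' \<notin> P''" "\<forall>z<m'. z \<in> P' \<longleftrightarrow> z \<in> P''"
    using assms(2,3,5) lex_greater_iff_first_difference by blast
  have "\<exists>k. k \<in> P \<and> k \<notin> P'' \<and> (\<forall>z<k. z \<in> P \<longleftrightarrow> z \<in> P'')"
  proof (cases m m' rule: linorder_cases)
    case less
    then show ?thesis using m m' by (intro exI[of _ m]) auto
  next
    case equal
    then show ?thesis using m m' by simp
  next
    case greater
    then show ?thesis using m m' by (intro exI[of _ m']) auto
  qed
  then show ?thesis using lex_greater_iff_first_difference[OF assms(1,3)] by blast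
qed

lemma lex_greater_total:
  assumes "finite P" "finite P'" "P \<noteq> P'"
  shows "lex_greater P P' \<or> lex_greater P' P"
proof -
  have "Min (sym_diff P P') \<in> sym_diff P P'"
    using assms by (intro Min_in) auto
  moreover have "sym_diff P' P = sym_diff P P'" by blast
  ultimately show ?thesis using assms by (auto simp: lex_greater_def)
qed

lemma lex_greatest_exists:
  assumes "finite Fam" "Fam \<noteq> {}" "\<forall>P\<in>Fam. finite P"
  shows "\<exists>P\<in>Fam. \<forall>P'\<in>Fam - {P}. lex_greater P P'"
  using assms
proof (induction Fam rule: finite_ne_induct)
  case (singleton X)
  then show ?case by simp
next
  case (insert X Fam)
  have fin: "finite X" "\<forall>P\<in>Fam. finite P" using insert.prems by simp_all
  obtain P where P: "P \<in> Fam" "\<forall>P'\<in>Fam - {P}. lex_greater P P'"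
    using insert.IH fin(2) by blast
  show ?case
  proof (cases "lex_greater X P")
    case True
    have "lex_greater X P'" if "P' \<in> Fam" for P'
    proof (cases "P' = P")
      case False
      then have "lex_greater P P'" using P(2) that by blast
      with True show ?thesis
        using lex_greater_trans[of X P P'] fin P(1) that by blast
    qed (use True in simp)
    then show ?thesis by blast
  next
    case False
    have "X \<noteq> P" using P(1) insert.hyps by blast
    then have "lex_greater P X"
      using False lex_greater_total[of X P] fin P(1) by blast
    then show ?thesis using P by blast
  qed
qed

lemma tie_break_eq_lex_greatest:
  "tie_break Fam = (THE P. P \<in> Fam \<and> (\<forall>P'\<in>Fam - {P}. lex_greater P P'))"
proof -
  have "(\<forall>P'\<in>Fam - {P}. Min (sym_diff P P') \<in> P) \<longleftrightarrow> (\<forall>P'\<in>Fam - {P}. lex_greater P P')"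
    for P unfolding lex_greater_def by blast
  then show ?thesis unfolding tie_break_def by (simp only:)
qed

lemma tie_break_in:
  assumes "finite Fam" "Fam \<noteq> {}" "\<forall>P\<in>Fam. finite P"
  shows "tie_break Fam \<in> Fam"
proof -
  obtain P where P: "P \<in> Fam" "\<forall>P'\<in>Fam - {P}. lex_greater P P'"
    using lex_greatest_exists[OF assms] by blast
  have "P' = P" if "P' \<in> Fam" "\<forall>P''\<in>Fam - {P'}. lex_greater P' P''" for P'
  proof (rule ccontr)
    assume "P' \<noteq> P"
    then have "lex_greater P P'" "lex_greater P' P" using P that by auto
    then show False using lex_greater_asym assms(3) P(1) that(1) by blast
  qed
  then have "tie_break Fam = P"
    unfolding tie_break_eq_lex_greatest using P by (intro the_equality) blast+
  then show ?thesis using P(1) by simp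
qed

definition pref_value :: "pref_model \<Rightarrow> (nat \<Rightarrow> nat) \<Rightarrow> nat set \<Rightarrow> nat set \<Rightarrow> nat" where
  "pref_value M c Q A = (case M of Overlap \<Rightarrow> card (A \<inter> Q) | CostModel \<Rightarrow> sum c (A \<inter> Q))"

lemma weak_pref_iff_pref_value: "weak_pref M c Q A A' \<longleftrightarrow> pref_value M c Q A' \<le> pref_value M c Q A"
  by (cases M) (simp_all add: weak_pref_def pref_value_def)

lemma strict_pref_iff_pref_value: "strict_pref M c Q A A' \<longleftrightarrow> pref_value M c Q A' < pref_value M c Q A"
  by (auto simp: strict_pref_def weak_pref_iff_pref_value)

lemma pref_value_mono:
  assumes "finite (A' \<inter> Q)" "A \<inter> Q \<subseteq> A' \<inter> Q"
  shows "pref_value M c Q A \<le> pref_value M c Q A'"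
  using assms by (cases M) (simp_all add: pref_value_def card_mono sum_mono2)

lemma best_nonempty:
  assumes "finite Fam" "Fam \<noteq> {}"
  shows "best M c Q Fam \<noteq> {}"
proof -
  let ?v = "pref_value M c Q"
  have "Max (?v ` Fam) \<in> ?v ` Fam" using assms by simp
  then obtain A where A: "A \<in> Fam" "?v A = Max (?v ` Fam)" by (metis imageE)
  then have "A \<in> best M c Q Fam"
    using assms(1) by (auto simp: best_def strict_pref_iff_pref_value not_less)
  then show ?thesis by blast
qed

lemma profile_on_update: "profile_on P As \<Longrightarrow> X \<subseteq> P \<Longrightarrow> profile_on P (As[i := X])"
  unfolding profile_on_def by (auto dest: set_update_subset_insert[THEN subsetD])

lemma allocation_rule_subset:
  "is_allocation_rule F \<Longrightarrow> valid_instance P c B \<Longrightarrow> profile_on P As \<Longrightarrow> F P c B As \<subseteq> P"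
  unfolding is_allocation_rule_def feasible_def by blast

(* tie_break is a definite description, so its value is only known once the lexicographic
   maximum is shown to exist and be unique; the best response is an outcome of F, which
   F_star then submits as a ballot. *)
lemma best_resp_subset:
  assumes "is_allocation_rule F" "valid_instance P c B" "profile_on P As"
  shows "best_resp M F prefs i P c B As \<subseteq> P"
proof -
  let ?Fam = "{F P c B (As[i := A']) | A'. A' \<subseteq> P}"
  let ?Best = "best M c (top c B (prefs ! i) P) ?Fam"
  have "?Fam \<subseteq> Pow P"
    using allocation_rule_subset[OF assms(1,2)] profile_on_update[OF assms(3)] by blast
  moreover have "finite P" using assms(2) by (simp add: valid_instance_def)
  ultimately have fin: "finite ?Fam" "\<forall>A\<in>?Fam. finite A"
    by (auto intro: finite_subset)
  have "?Best \<subseteq> ?Fam" by (auto simp: best_def)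
  moreover have "?Fam \<noteq> {}" by blast
  ultimately have "tie_break ?Best \<in> ?Fam"
    using fin best_nonempty tie_break_in[of ?Best] by (meson finite_subset subsetD)
  with \<open>?Fam \<subseteq> Pow P\<close> show ?thesis by (auto simp: best_resp_def)
qed

lemma profile_on_best_resp_update:
  assumes "is_allocation_rule F" "valid_instance P c B" "profile_on P As"
  shows "profile_on P (As[i := best_resp M F prefs i P c B As])"
  using profile_on_update[OF assms(3) best_resp_subset[OF assms]] .

lemma F_star_subset:
  assumes "is_allocation_rule F" "valid_instance P c B" "profile_on P As"
  shows "F_star M F prefs i P c B As \<subseteq> P"
  unfolding F_star_def
  using allocation_rule_subset[OF assms(1,2) profile_on_best_resp_update[OF assms]] .

lemma F_star_exhaustive:
  assumes "exhaustive_rule F" "is_allocation_rule F" "valid_instance P c B" "profile_on P As"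
  shows "exhaustive P c B (F_star M F prefs i P c B As)"
  using assms(1,3) profile_on_best_resp_update[OF assms(2-4)]
  unfolding F_star_def exhaustive_rule_def by blast

lemma exhaustive_eq_if_affordable:
  assumes "finite P" "sum c P \<le> B" "exhaustive P c B A"
  shows "A = P"
proof -
  have "A \<subseteq> P" using assms(3) by (simp add: exhaustive_def feasible_def)
  moreover have "p \<in> A" if "p \<in> P" for p
  proof (rule ccontr)
    assume "p \<notin> A"
    have "sum c (insert p A) \<le> sum c P"
      using \<open>A \<subseteq> P\<close> that assms(1) by (intro sum_mono2) auto
    moreover have "\<not> sum c (insert p A) \<le> B"
      using assms(3) that \<open>p \<notin> A\<close> by (simp add: exhaustive_def)
    ultimately show False using assms(2) by simp
  qed
  ultimately show ?thesis by blast
qed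

lemma non_wasteful_eq_if_affordable:
  assumes "is_shortlisting_rule R" "non_wasteful R" "valid_instance PP c B" "profile_on PP Ps"
    and "sum c (\<Union> (set Ps)) \<le> B" "\<forall>p\<in>\<Union> (set Ps). c p > 0"
  shows "R PP c B Ps = \<Union> (set Ps)"
proof (rule ccontr)
  let ?U = "\<Union> (set Ps)"
  assume "R PP c B Ps \<noteq> ?U"
  moreover have sub: "R PP c B Ps \<subseteq> ?U"
    using assms(1,3,4) by (simp add: is_shortlisting_rule_def)
  ultimately obtain p where "p \<in> ?U - R PP c B Ps" by blast
  moreover have "finite ?U"
    using assms(3,4) by (auto simp: valid_instance_def profile_on_def intro: finite_subset)
  ultimately have "sum c (R PP c B Ps) < sum c ?U"
    using sub assms(6) by (intro sum_strict_mono2) auto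
  then show False
    using assms(2-5) \<open>R PP c B Ps \<noteq> ?U\<close> unfolding non_wasteful_def by fastforce
qed

lemma successful_manip_if_uniformly_better:
  assumes shortlist: "R PP c B Ps = SP" and shortlist': "R PP c B (Ps[i := P']) = SP'"
    and better: "\<And>As As'. length As = length Ps \<Longrightarrow> profile_on SP As \<Longrightarrow>
      length As' = length Ps \<Longrightarrow> profile_on SP' As' \<Longrightarrow>
      strict_pref M c (top c B (prefs ! i) (SP \<union> SP'))
        (F_star M F prefs i SP' c B As') (F_star M F prefs i SP c B As)"
    and "length prefs = length Ps"
    and "\<forall>r\<in>set prefs. top c B r SP \<subseteq> SP \<and> top c B r SP' \<subseteq> SP'"
  shows "successful_manip k M R F prefs PP c B Ps i P'"
proof -
  let ?profs = "\<lambda>X. {As. length As = length Ps \<and> profile_on X As}"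
  let ?Q = "top c B (prefs ! i) (SP \<union> SP')"
  let ?Fs = "F_star M F prefs i"
  have all_strict:
    "\<forall>A\<in>?profs SP. \<forall>A'\<in>?profs SP'. strict_pref M c ?Q (?Fs SP' c B A') (?Fs SP c B A)"
    using better by blast
  have "replicate (length Ps) {} \<in> ?profs X" for X by (simp add: profile_on_def)
  then have ex_strict:
    "\<exists>A\<in>?profs SP. \<exists>A'\<in>?profs SP'. strict_pref M c ?Q (?Fs SP' c B A') (?Fs SP c B A)"
    using all_strict by blast
  have truthful_profiles: "profile_on SP (map (\<lambda>r. top c B r SP) prefs)"
    and manipulated_profiles: "profile_on SP' (map (\<lambda>r. top c B r SP') prefs)"
    using assms(5) by (auto simp: profile_on_def)
  note unfold_manip = successful_manip_def Let_def shortlist shortlist'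
  show ?thesis
  proof (cases k)
    case Pessimistic
    show ?thesis unfolding unfold_manip Pessimistic
      using all_strict ex_strict by (simp add: strict_pref_def)
  next
    case Optimistic
    show ?thesis unfolding unfold_manip Optimistic
      using ex_strict by simp
  next
    case Anticipative
    show ?thesis unfolding unfold_manip Anticipative
      using better[OF _ truthful_profiles _ manipulated_profiles] assms(4) by simp
  qed
qed

definition index_order :: "nat rel" where
  "index_order = {(x, y). x < y}"

lemma strict_linear_order_on_index_order: "strict_linear_order_on A index_order"
  by (auto simp: index_order_def strict_linear_order_on_def trans_def irrefl_def total_on_def)

lemma order_list_index_order:
  assumes "sorted xs" "distinct xs"
  shows "order_list index_order (set xs) = xs"
  unfolding order_list_def
proof (rule the_equality)
  show "set xs = set xs \<and> distinct xs \<and> sorted_wrt (\<lambda>x y. (x, y) \<in> index_order) xs"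
    using assms by (simp add: index_order_def strict_sorted_iff)
next
  fix ys assume "set ys = set xs \<and> distinct ys \<and> sorted_wrt (\<lambda>x y. (x, y) \<in> index_order) ys"
  then show "ys = xs"
    using assms sorted_distinct_set_unique by (auto simp: index_order_def strict_sorted_iff)
qed

lemma top_index_order:
  assumes "sorted xs" "distinct xs"
  shows "top c B index_order (set xs) =
    foldl (\<lambda>S x. if sum c S + c x \<le> B then insert x S else S) {} xs"
  by (simp add: top_def greed_def order_list_index_order[OF assms])

lemma foldl_greedy_subset:
  "foldl (\<lambda>S x. if sum c S + c x \<le> B then insert x S else S) S0 xs \<subseteq> S0 \<union> set xs"
proof (induction xs arbitrary: S0)
  case (Cons x xs)
  let ?step = "\<lambda>S x. if sum c S + c x \<le> B then insert x S else S"
  have "foldl ?step (?step S0 x) xs \<subseteq> ?step S0 x \<union> set xs" by (rule Cons.IH)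
  then show ?case by auto
qed simp

lemma top_index_order_subset:
  assumes "finite S"
  shows "top c B index_order S \<subseteq> S"
proof -
  have "top c B index_order S =
      foldl (\<lambda>S x. if sum c S + c x \<le> B then insert x S else S) {} (sorted_list_of_set S)"
    using top_index_order[of "sorted_list_of_set S"] assms by simp
  also have "\<dots> \<subseteq> set (sorted_list_of_set S)"
    using foldl_greedy_subset[of c B "{}"] by simp
  finally show ?thesis using assms by simp
qed

definition example_cost :: "nat \<Rightarrow> nat" where
  "example_cost p = (if p = 1 then 2 else 1)"

lemma example_top:
  "top example_cost 2 index_order {1, 2} = {1}"
  "top example_cost 2 index_order {0, 2} = {0, 2}"
  "top example_cost 2 index_order {0, 1, 2} = {0, 2}"
  using top_index_order[of "[1, 2]"] top_index_order[of "[0, 2]"] top_index_order[of "[0, 1, 2]"]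
  by (simp_all add: example_cost_def insert_commute)

lemma example_valid_instance: "S \<subseteq> {0, 1, 2} \<Longrightarrow> valid_instance S example_cost 2"
  by (auto simp: valid_instance_def example_cost_def intro: finite_subset)

lemma example_shortlists:
  assumes "is_shortlisting_rule R" "non_wasteful R"
  shows "R {0, 1, 2} example_cost 2 [{1}, {0}] \<subseteq> {0, 1}"
    and "R {0, 1, 2} example_cost 2 ([{1}, {0}][0 := {2}]) = {0, 2}"
proof -
  have valid: "valid_instance {0, 1, 2} example_cost 2" by (rule example_valid_instance) simp
  show "R {0, 1, 2} example_cost 2 [{1}, {0}] \<subseteq> {0, 1}"
    using assms(1) valid unfolding is_shortlisting_rule_def by (force simp: profile_on_def)
  show "R {0, 1, 2} example_cost 2 ([{1}, {0}][0 := {2}]) = {0, 2}"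
    using non_wasteful_eq_if_affordable[OF assms valid, of "[{2}, {0}]"]
    by (auto simp: profile_on_def example_cost_def)
qed

lemma example_truthful_value:
  assumes "is_allocation_rule F" "SP \<subseteq> {0, 1}" "profile_on SP As"
  shows "pref_value M example_cost {0, 2} (F_star M F prefs i SP example_cost 2 As) \<le> 1"
proof -
  let ?A = "F_star M F prefs i SP example_cost 2 As"
  have "valid_instance SP example_cost 2" using assms(2) by (intro example_valid_instance) auto
  then have "?A \<subseteq> {0, 1}"
    using F_star_subset[OF assms(1) _ assms(3)] assms(2) by blast
  then have "?A \<inter> {0, 2} \<subseteq> {0} \<inter> {0, 2}" by auto
  then have "pref_value M example_cost {0, 2} ?A \<le> pref_value M example_cost {0, 2} {0}"
    by (intro pref_value_mono) simp_all
  then show ?thesis by (cases M) (simp_all add: pref_value_def example_cost_def)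
qed

lemma example_manipulated_value:
  assumes "exhaustive_rule F" "is_allocation_rule F" "profile_on {0, 2} As"
  shows "pref_value M example_cost {0, 2} (F_star M F prefs i {0, 2} example_cost 2 As) = 2"
proof -
  have "sum example_cost {0, 2} \<le> 2" by (simp add: example_cost_def)
  moreover have "exhaustive {0, 2} example_cost 2 (F_star M F prefs i {0, 2} example_cost 2 As)"
    by (rule F_star_exhaustive[OF assms(1,2) example_valid_instance assms(3)]) auto
  ultimately have "F_star M F prefs i {0, 2} example_cost 2 As = {0, 2}"
    by (intro exhaustive_eq_if_affordable) simp_all
  then show ?thesis by (cases M) (simp_all add: pref_value_def example_cost_def)
qed

lemma example_manipulation_successful:
  assumes "is_shortlisting_rule R" "non_wasteful R" "is_allocation_rule F" "exhaustive_rule F"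
  shows "successful_manip k M R F [index_order, index_order] {0, 1, 2} example_cost 2 [{1}, {0}] 0 {2}"
proof -
  define SP where "SP = R {0, 1, 2} example_cost 2 [{1}, {0}]"
  have SP_sub: "SP \<subseteq> {0, 1}" unfolding SP_def by (rule example_shortlists(1)[OF assms(1,2)])
  then have "SP \<union> {0, 2} = {0, 2} \<or> SP \<union> {0, 2} = {0, 1, 2}" by blast
  then have Q: "top example_cost 2 ([index_order, index_order] ! 0) (SP \<union> {0, 2}) = {0, 2}"
    using example_top by auto
  have better: "strict_pref M example_cost {0, 2}
      (F_star M F prefs i {0, 2} example_cost 2 As') (F_star M F prefs i SP example_cost 2 As)"
    if "profile_on SP As" "profile_on {0, 2} As'" for prefs i As As'
    using example_truthful_value[where M = M and prefs = prefs and i = i, OF assms(3) SP_sub that(1)]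
      example_manipulated_value[where M = M and prefs = prefs and i = i, OF assms(4,3) that(2)]
    by (simp add: strict_pref_iff_pref_value)
  have "finite SP" using SP_sub finite_subset by auto
  then have "top example_cost 2 index_order SP \<subseteq> SP"
    and "top example_cost 2 index_order {0, 2} \<subseteq> {0, 2}"
    using top_index_order_subset by simp_all
  then show ?thesis
    by (intro successful_manip_if_uniformly_better[where R = R and Ps = "[{1}, {0}]" and i = 0,
          OF SP_def[symmetric] example_shortlists(2)[OF assms(1,2)]])
      (simp_all add: Q[simplified] better)
qed

theorem theorem1:
  fixes M :: pref_model and R F :: rule
  assumes "is_shortlisting_rule R" and "non_wasteful R"
    and "is_allocation_rule F" and "exhaustive_rule F"
  shows "\<not> R_FSSP Pessimistic M R F \<and> \<not> R_FSSP Anticipative M R F \<and> \<not> R_FSSP Optimistic M R F"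
proof -
  have "\<not> R_FSSP k M R F" for k
  proof
    assume no_manip: "R_FSSP k M R F"
    have "\<not> successful_manip k M R F [index_order, index_order] {0, 1, 2} example_cost 2
        ([{1}, {0}][0 := top example_cost 2 ([index_order, index_order] ! 0) ([{1, 2}, {0}] ! 0)]) 0 {2}"
      by (rule no_manip[unfolded R_FSSP_def, rule_format,
            of "{0, 1, 2}" example_cost 2 "[{1, 2}, {0}]" "[{1}, {0}]" "[index_order, index_order]" 0 "{2}"])
        (auto simp: less_Suc_eq valid_instance_def example_cost_def strict_linear_order_on_index_order)
    then show False
      using example_manipulation_successful[OF assms] example_top(1) by simp
  qed
  then show ?thesis by blast
qed

end
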